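(* Let $k\ge 1$, $t\ge 0$, $n\geq 2k+t$ and $1\leq r \leq n-k-t+1$ be integers. Let $\mathcal{F} \subseteq\binom{[n]}{k+t}$ be shifted with $|\mathcal{F}|\geq r$. If $r \leq n-k-t$, then $|\mathcal{F}(\bar{n})|\geq r$. If $r=n-k-t+1$, then $|\mathcal{F}(\bar{n})|\geq r-1$.
   Context: A family $\mathcal{F}\subseteq 2^{[n]}$ is shifted if for every $F\in\mathcal{F}$ and all $i<j$ with $i\notin F$, $j\in F$, we have $(F\setminus\{j\})\cup\{i\}\in\mathcal{F}$. $\mathcal{F}(\bar n)=\{F\in\mathcal{F}: n\notin F\}$. $\binom{[n]}{m}$ denotes the $m$-subsets of $[n]=\{1,\dots,n\}$. *)

theory Defs
  imports Main
begin

definition shifted :: "nat \<Rightarrow> nat set set \<Rightarrow> bool" where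
  "shifted n F \<longleftrightarrow> F \<subseteq> Pow {1..n} \<and>
     (\<forall>A\<in>F. \<forall>i j. 1 \<le> i \<and> i < j \<and> j \<le> n \<and> i \<notin> A \<and> j \<in> A \<longrightarrow> (A - {j}) \<union> {i} \<in> F)"

definition avoid_n :: "nat \<Rightarrow> nat set set \<Rightarrow> nat set set" where
  "avoid_n n F = {A \<in> F. n \<notin> A}"

end

theory Submission
  imports Defs
begin

text \<open>If no member of \<open>F\<close> contains \<open>n\<close>, then \<open>F(n-bar) = F\<close>. Otherwise take \<open>A \<in> F\<close>
  with \<open>n \<in> A\<close>: shifting \<open>n\<close> to each of the \<open>n - |A|\<close> elements \<open>i \<notin> A\<close> of \<open>[n]\<close> yields
  distinct members \<open>A - {n} \<union> {i}\<close> of \<open>F(n-bar)\<close>.\<close>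

lemma shifted_finite: "shifted n F \<Longrightarrow> finite F"
  unfolding shifted_def by (meson finite_Pow_iff finite_atLeastAtMost finite_subset)

lemma finite_avoid_n: "finite F \<Longrightarrow> finite (avoid_n n F)"
  unfolding avoid_n_def by simp

lemma avoid_n_eq_self: "(\<forall>A\<in>F. n \<notin> A) \<Longrightarrow> avoid_n n F = F"
  unfolding avoid_n_def by auto

lemma shifted_replace_n_in_avoid_n:
  assumes "shifted n F" and "A \<in> F" and "n \<in> A" and "i \<in> {1..n} - A"
  shows "(A - {n}) \<union> {i} \<in> avoid_n n F"
proof -
  have "i < n" using assms(3,4) by (cases "i = n") auto
  then have "(A - {n}) \<union> {i} \<in> F"
    using assms unfolding shifted_def by auto
  with \<open>i < n\<close> show ?thesis unfolding avoid_n_def by auto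
qed

lemma shifted_card_avoid_n_ge_card_compl:
  assumes "shifted n F" and "A \<in> F" and "n \<in> A"
  shows "card ({1..n} - A) \<le> card (avoid_n n F)"
proof -
  let ?g = "\<lambda>i. (A - {n}) \<union> {i}"
  have "inj_on ?g ({1..n} - A)"
    by (rule inj_onI) blast
  moreover have "?g ` ({1..n} - A) \<subseteq> avoid_n n F"
    using shifted_replace_n_in_avoid_n[OF assms] by blast
  ultimately show ?thesis
    using card_inj_on_le finite_avoid_n shifted_finite assms(1) by metis
qed

lemma shifted_uniform_card_avoid_n_ge:
  assumes "shifted n F" and "\<forall>A\<in>F. card A = m"
  shows "min (card F) (n - m) \<le> card (avoid_n n F)"
proof (cases "\<exists>A\<in>F. n \<in> A")
  case False
  then show ?thesis using avoid_n_eq_self by fastforce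
next
  case True
  then obtain A where A: "A \<in> F" "n \<in> A" by blast
  have "A \<subseteq> {1..n}" using A(1) assms(1) unfolding shifted_def by auto
  then have "card ({1..n} - A) = n - m"
    using A(1) assms(2) by (simp add: card_Diff_subset finite_subset)
  then show ?thesis
    using shifted_card_avoid_n_ge_card_compl[OF assms(1) A] by simp
qed

theorem lemma2p2:
  fixes k t n r :: nat and F :: "nat set set"
  assumes "k \<ge> 1" and "n \<ge> 2*k + t"
    and "1 \<le> r" and "r \<le> n - k - t + 1"
    and "F \<subseteq> {A. A \<subseteq> {1..n} \<and> card A = k + t}"
    and "shifted n F" and "card F \<ge> r"
  shows "(r \<le> n - k - t \<longrightarrow> card (avoid_n n F) \<ge> r)
       \<and> (r = n - k - t + 1 \<longrightarrow> card (avoid_n n F) \<ge> r - 1)"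
proof -
  have "\<forall>A\<in>F. card A = k + t" using assms(5) by auto
  with assms(6) have "min (card F) (n - (k + t)) \<le> card (avoid_n n F)"
    by (rule shifted_uniform_card_avoid_n_ge)
  with assms(7) show ?thesis by auto
qed

end
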